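(* Let $\rho^{AB}=\frac14\big(\mathbb{I}\otimes\mathbb{I}+\vec x\cdot\vec\sigma\otimes\mathbb{I}+\sum_{i=1}^3 t_i\,\sigma_i\otimes\sigma_i\big)$ be a two-qubit density matrix (i.e. $\vec y=0$) with $\vec x\in\mathbb{R}^3$ and $T=\mathrm{diag}\{t_1,t_2,t_3\}$ satisfying $T^t\vec x=0$. Then $$\min_{\{\Pi_k^B\}}S(\rho^A|\{\Pi_k^B\})=h_2\!\left(\frac{1+\sqrt{|\vec x|^2+t_{\max}^2}}{2}\right),\qquad t_{\max}=\max\{|t_1|,|t_2|,|t_3|\},$$ the minimum being over all von Neumann measurements on qubit $B$, and it is attained when the measurement direction $\hat n$ is an eigenvector of $T^tT$ for its largest eigenvalue $t_{\max}^2$.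
   Context: $\sigma_i$ are the Pauli matrices, $\vec a\cdot\vec\sigma=\sum_i a_i\sigma_i$. A von Neumann measurement on $B$ with direction $\hat n$ (unit vector in $\mathbb{R}^3$) is $\Pi_k^B=\frac12(\mathbb{I}\pm\hat n\cdot\vec\sigma)$, $k=0,1$; $p_k=\mathrm{Tr}[(\mathbb{I}\otimes\Pi_k^B)\rho^{AB}(\mathbb{I}\otimes\Pi_k^B)]$, $\rho^A_k=\mathrm{Tr}_B[(\mathbb{I}\otimes\Pi_k^B)\rho^{AB}(\mathbb{I}\otimes\Pi_k^B)]/p_k$, and $S(\rho^A|\{\Pi_k^B\})=\sum_kp_kS(\rho^A_k)$ with $S(\rho)=-\mathrm{Tr}(\rho\log_2\rho)$. $h_2(x)=-x\log_2x-(1-x)\log_2(1-x)$. *)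

theory Defs
  imports Complex_Main "Jordan_Normal_Form.Char_Poly"
begin

definition mtrace :: "complex mat \<Rightarrow> complex" where
  "mtrace A = (\<Sum>i<dim_row A. A $$ (i,i))"

text \<open>Kronecker (tensor) product of matrices, first factor = system A.\<close>
definition kron :: "complex mat \<Rightarrow> complex mat \<Rightarrow> complex mat" where
  "kron A B = mat (dim_row A * dim_row B) (dim_col A * dim_col B)
     (\<lambda>(i,j). A $$ (i div dim_row B, j div dim_col B) * B $$ (i mod dim_row B, j mod dim_col B))"

definition ptrace_B :: "complex mat \<Rightarrow> complex mat" where
  "ptrace_B M = mat 2 2 (\<lambda>(i,j). \<Sum>k<2. M $$ (2*i+k, 2*j+k))"

definition hermitian :: "complex mat \<Rightarrow> bool" where
  "hermitian A \<longleftrightarrow> square_mat A \<and>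
     (\<forall>i<dim_row A. \<forall>j<dim_row A. A $$ (i,j) = cnj (A $$ (j,i)))"

definition psd :: "complex mat \<Rightarrow> bool" where
  "psd A \<longleftrightarrow> hermitian A \<and>
     (\<forall>v \<in> carrier_vec (dim_row A). 0 \<le> Re (\<Sum>i<dim_row A. cnj (v $ i) * (A *\<^sub>v v) $ i))"

definition density_matrix :: "nat \<Rightarrow> complex mat \<Rightarrow> bool" where
  "density_matrix n A \<longleftrightarrow> A \<in> carrier_mat n n \<and> psd A \<and> mtrace A = 1"

definition pauli :: "nat \<Rightarrow> complex mat" where
  "pauli i = (if i = 0 then mat_of_rows_list 2 [[0, 1], [1, 0]]
              else if i = 1 then mat_of_rows_list 2 [[0, -\<i>], [\<i>, 0]]
              else mat_of_rows_list 2 [[1, 0], [0, -1]])"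
  \<comment> \<open>index 0,1,2 stands for sigma_1, sigma_2, sigma_3\<close>

definition dot_sigma :: "real vec \<Rightarrow> complex mat" where
  "dot_sigma a = complex_of_real (a $ 0) \<cdot>\<^sub>m pauli 0 + complex_of_real (a $ 1) \<cdot>\<^sub>m pauli 1
               + complex_of_real (a $ 2) \<cdot>\<^sub>m pauli 2"

definition rho_AB :: "real vec \<Rightarrow> real vec \<Rightarrow> complex mat" where
  "rho_AB x t = (1/4 :: complex) \<cdot>\<^sub>m
     (kron (1\<^sub>m 2) (1\<^sub>m 2) + kron (dot_sigma x) (1\<^sub>m 2)
      + complex_of_real (t $ 0) \<cdot>\<^sub>m kron (pauli 0) (pauli 0)
      + complex_of_real (t $ 1) \<cdot>\<^sub>m kron (pauli 1) (pauli 1)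
      + complex_of_real (t $ 2) \<cdot>\<^sub>m kron (pauli 2) (pauli 2))"

definition Tmat :: "real vec \<Rightarrow> real mat" where
  "Tmat t = mat 3 3 (\<lambda>(i,j). if i = j then t $ i else 0)"

definition eta :: "real \<Rightarrow> real" where
  "eta r = (if r \<le> 0 then 0 else - r * log 2 r)"

definition h2 :: "real \<Rightarrow> real" where
  "h2 x = eta x + eta (1 - x)"

text \<open>von Neumann entropy: sum over the eigenvalues (roots of the characteristic
  polynomial, counted with algebraic multiplicity) of - lambda log2 lambda.\<close>
definition vn_entropy :: "complex mat \<Rightarrow> real" where
  "vn_entropy A = (\<Sum>l \<in> {l. poly (char_poly A) l = 0}.
                     real (order l (char_poly A)) * eta (Re l))"

definition proj_B :: "real vec \<Rightarrow> nat \<Rightarrow> complex mat" where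
  "proj_B n k = (1/2 :: complex) \<cdot>\<^sub>m
     (if k = 0 then 1\<^sub>m 2 + dot_sigma n else 1\<^sub>m 2 - dot_sigma n)"

definition post_meas :: "complex mat \<Rightarrow> real vec \<Rightarrow> nat \<Rightarrow> complex mat" where
  "post_meas \<rho> n k = kron (1\<^sub>m 2) (proj_B n k) * \<rho> * kron (1\<^sub>m 2) (proj_B n k)"

definition meas_prob :: "complex mat \<Rightarrow> real vec \<Rightarrow> nat \<Rightarrow> real" where
  "meas_prob \<rho> n k = Re (mtrace (post_meas \<rho> n k))"

definition rho_A_cond :: "complex mat \<Rightarrow> real vec \<Rightarrow> nat \<Rightarrow> complex mat" where
  "rho_A_cond \<rho> n k = complex_of_real (1 / meas_prob \<rho> n k) \<cdot>\<^sub>m ptrace_B (post_meas \<rho> n k)"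

definition cond_entropy :: "complex mat \<Rightarrow> real vec \<Rightarrow> real" where
  "cond_entropy \<rho> n = (\<Sum>k<2. meas_prob \<rho> n k * vn_entropy (rho_A_cond \<rho> n k))"

end

theory Submission
  imports Defs
begin

text \<open>Measuring qubit B along \<open>n\<close> gives each outcome with probability 1/2 and leaves A in the
  qubit state with Bloch vector \<open>x \<plusminus> T n\<close>. Since \<open>T\<^sup>t x = 0\<close>, the vectors \<open>x\<close> and \<open>T n\<close> are
  orthogonal, so both outcomes have Bloch length \<open>sqrt (x \<bullet> x + T n \<bullet> T n)\<close>, and the conditional
  entropy is \<open>h2 ((1 + sqrt (x \<bullet> x + T n \<bullet> T n)) / 2)\<close>. This decreases in the Bloch length, and
  \<open>T n \<bullet> T n = n \<bullet> T\<^sup>t T n \<le> tmax\<^sup>2\<close> for unit \<open>n\<close>, with equality for the eigenvectors of \<open>T\<^sup>t T\<close>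
  belonging to \<open>tmax\<^sup>2\<close>, for instance the coordinate vector of a largest \<open>\<bar>t\<^sub>i\<bar>\<close>.\<close>

lemma pauli_dim [simp]: "dim_row (pauli i) = 2" "dim_col (pauli i) = 2"
  by (simp_all add: pauli_def mat_of_rows_list_def)

lemma pauli_index [simp]:
  "pauli 0 $$ (0,0) = 0" "pauli 0 $$ (0,Suc 0) = 1" "pauli 0 $$ (Suc 0,0) = 1"
  "pauli 0 $$ (Suc 0,Suc 0) = 0"
  "pauli (Suc 0) $$ (0,0) = 0" "pauli (Suc 0) $$ (0,Suc 0) = -\<i>" "pauli (Suc 0) $$ (Suc 0,0) = \<i>"
  "pauli (Suc 0) $$ (Suc 0,Suc 0) = 0"
  "pauli 2 $$ (0,0) = 1" "pauli 2 $$ (0,Suc 0) = 0" "pauli 2 $$ (Suc 0,0) = 0"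
  "pauli 2 $$ (Suc 0,Suc 0) = -1"
  by (simp_all add: pauli_def mat_of_rows_list_def)

lemma dot_sigma_dim [simp]: "dim_row (dot_sigma a) = 2" "dim_col (dot_sigma a) = 2"
  by (simp_all add: dot_sigma_def)

lemma dot_sigma_carrier [simp]: "dot_sigma a \<in> carrier_mat 2 2"
  by (rule carrier_matI) simp_all

lemma dot_sigma_index [simp]:
  "dot_sigma a $$ (0,0) = complex_of_real (a $ 2)"
  "dot_sigma a $$ (0,Suc 0) = complex_of_real (a $ 0) - \<i> * complex_of_real (a $ Suc 0)"
  "dot_sigma a $$ (Suc 0,0) = complex_of_real (a $ 0) + \<i> * complex_of_real (a $ Suc 0)"
  "dot_sigma a $$ (Suc 0,Suc 0) = - complex_of_real (a $ 2)"
  by (simp_all add: dot_sigma_def)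

lemma kron_dim [simp]:
  "dim_row (kron A B) = dim_row A * dim_row B" "dim_col (kron A B) = dim_col A * dim_col B"
  by (simp_all add: kron_def)

lemma kron_index:
  "i < dim_row A * dim_row B \<Longrightarrow> j < dim_col A * dim_col B \<Longrightarrow>
   kron A B $$ (i,j) = A $$ (i div dim_row B, j div dim_col B) * B $$ (i mod dim_row B, j mod dim_col B)"
  by (simp add: kron_def)

lemma ptrace_B_dim [simp]: "dim_row (ptrace_B M) = 2" "dim_col (ptrace_B M) = 2"
  by (simp_all add: ptrace_B_def)

lemma proj_B_dim [simp]: "dim_row (proj_B n k) = 2" "dim_col (proj_B n k) = 2"
  by (simp_all add: proj_B_def)

lemma Tmat_dim [simp]: "dim_row (Tmat t) = 3" "dim_col (Tmat t) = 3"
  by (simp_all add: Tmat_def)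

lemma Tmat_carrier [simp]: "Tmat t \<in> carrier_mat 3 3"
  by (rule carrier_matI) simp_all

lemma Tmat_mult_vec_index:
  assumes "n \<in> carrier_vec 3" "i < 3"
  shows "(Tmat t *\<^sub>v n) $ i = t $ i * n $ i"
  using assms by (auto simp: Tmat_def scalar_prod_def eval_nat_numeral atLeast0_lessThan_Suc less_Suc_eq)

lemma sum_lessThan_2: "(\<Sum>k<2::nat. f k) = f 0 + f 1"
  by (simp add: eval_nat_numeral)

lemma sum_lessThan_4: "(\<Sum>k<4::nat. f k) = f 0 + f 1 + f 2 + f 3"
  by (simp add: eval_nat_numeral)

lemma index_mult_mat_lessThan:
  "i < dim_row A \<Longrightarrow> j < dim_col B \<Longrightarrow> dim_col A = dim_row B \<Longrightarrow>
   (A * B) $$ (i,j) = (\<Sum>k<dim_col A. A $$ (i,k) * B $$ (k,j))"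
  by (simp add: scalar_prod_def atLeast0LessThan)

lemma scalar_prod_vec3:
  "u \<in> carrier_vec 3 \<Longrightarrow> v \<in> carrier_vec 3 \<Longrightarrow> u \<bullet> v = u $ 0 * v $ 0 + u $ 1 * v $ 1 + u $ 2 * v $ 2"
  by (simp add: scalar_prod_def eval_nat_numeral atLeast0_lessThan_Suc ac_simps)

lemma mtrace_ptrace_B: "dim_row M = 4 \<Longrightarrow> mtrace (ptrace_B M) = mtrace M"
  by (simp add: mtrace_def ptrace_B_def eval_nat_numeral)

lemma mtrace_2x2: "A \<in> carrier_mat 2 2 \<Longrightarrow> mtrace A = A $$ (0,0) + A $$ (1,1)"
  by (simp add: mtrace_def eval_nat_numeral)

lemma det_2x2:
  assumes "A \<in> carrier_mat 2 2"
  shows "det A = A $$ (0,0) * A $$ (1,1) - A $$ (0,1) * A $$ (1,0)"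
proof -
  have "det A = (\<Sum>i<2. A $$ (i,0) * cofactor A i 0)"
    by (rule laplace_expansion_column[OF assms]) simp
  also have "\<dots> = A $$ (0,0) * A $$ (1,1) - A $$ (0,1) * A $$ (1,0)"
    using assms by (simp add: eval_nat_numeral cofactor_def det_single mat_delete_carrier mat_delete_def)
  finally show ?thesis .
qed

lemma char_poly_2x2:
  assumes "A \<in> carrier_mat 2 2"
  shows "char_poly A = [:det A, - mtrace A, 1:]"
  using assms by (simp add: char_poly_def char_poly_matrix_def det_2x2 mtrace_2x2 algebra_simps)

subsection \<open>Entropy of a qubit state\<close>

lemma vn_entropy_qubit:
  fixes A :: "complex mat" and r :: real
  assumes A: "A \<in> carrier_mat 2 2" and tr: "mtrace A = 1"
    and dt: "det A = complex_of_real ((1 - r\<^sup>2) / 4)" and r: "0 \<le> r"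
  shows "vn_entropy A = h2 ((1 + r) / 2)"
proof -
  define l1 where "l1 = complex_of_real ((1 + r) / 2)"
  define l2 where "l2 = complex_of_real ((1 - r) / 2)"
  have "l1 * l2 = complex_of_real ((1 - r\<^sup>2) / 4)" "l1 + l2 = 1"
    unfolding l1_def l2_def of_real_mult [symmetric] of_real_add [symmetric]
    by (simp_all add: power2_eq_square field_simps)
  then have cp: "char_poly A = [:-l1, 1:] * [:-l2, 1:]"
    by (simp add: char_poly_2x2 [OF A] tr dt algebra_simps)
  have "poly (char_poly A) l = (l - l1) * (l - l2)" for l
    by (simp add: cp algebra_simps)
  then have roots: "{l. poly (char_poly A) l = 0} = {l1, l2}"
    by auto
  show ?thesis
  proof (cases "r = 0")
    case True
    then have "l2 = l1"
      by (simp add: l1_def l2_def)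
    then have "vn_entropy A = real (order l1 (char_poly A)) * eta (Re l1)"
      unfolding vn_entropy_def roots by simp
    also have "char_poly A = [:-l1, 1:] ^ 2"
      using cp \<open>l2 = l1\<close> by (simp only: power2_eq_square)
    finally show ?thesis
      unfolding order_power_n_n using True by (simp add: h2_def l1_def)
  next
    case False
    then have "l1 \<noteq> l2"
      using r by (simp add: l1_def l2_def)
    have lin: "order a [:-a, 1:] = 1" "b \<noteq> a \<Longrightarrow> order b [:-a, 1:] = 0" for a b :: complex
      using order_power_n_n [of a 1] by (auto intro: order_0I)
    have nonzero: "[:-l1, 1:] * [:-l2, 1:] \<noteq> 0"
      by simp
    have "order l1 (char_poly A) = 1" "order l2 (char_poly A) = 1"
      unfolding cp order_mult [OF nonzero] using lin \<open>l1 \<noteq> l2\<close> by auto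
    with \<open>l1 \<noteq> l2\<close> show ?thesis
      unfolding vn_entropy_def roots by (simp add: h2_def l1_def l2_def field_simps)
  qed
qed

lemma vn_entropy_bloch:
  assumes b: "b \<in> carrier_vec 3"
  shows "vn_entropy ((1/2) \<cdot>\<^sub>m (1\<^sub>m 2 + dot_sigma b)) = h2 ((1 + sqrt (b \<bullet> b)) / 2)"
proof (rule vn_entropy_qubit)
  let ?A = "(1/2) \<cdot>\<^sub>m (1\<^sub>m 2 + dot_sigma b)"
  show "?A \<in> carrier_mat 2 2" "mtrace ?A = 1"
    by (simp_all add: mtrace_2x2 field_simps)
  have bb: "b \<bullet> b = (b $ 0)\<^sup>2 + (b $ 1)\<^sup>2 + (b $ 2)\<^sup>2"
    using b by (simp add: scalar_prod_vec3 power2_eq_square)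
  then show "0 \<le> sqrt (b \<bullet> b)"
    by simp
  from bb have "(sqrt (b \<bullet> b))\<^sup>2 = (b $ 0)\<^sup>2 + (b $ 1)\<^sup>2 + (b $ 2)\<^sup>2"
    by simp
  then show "det ?A = complex_of_real ((1 - (sqrt (b \<bullet> b))\<^sup>2) / 4)"
    by (simp add: det_2x2 field_simps power2_eq_square)
qed

subsection \<open>Monotonicity of the binary entropy\<close>

lemma eta_nonneg: "0 \<le> u \<Longrightarrow> u \<le> 1 \<Longrightarrow> 0 \<le> eta u"
  by (auto simp: eta_def mult_nonneg_nonpos)

lemma h2_bloch_deriv:
  assumes "-1 < y" "y < 1"
  shows "((\<lambda>y. h2 ((1 + y) / 2)) has_real_derivative (ln ((1 - y) / 2) - ln ((1 + y) / 2)) / (2 * ln 2)) (at y)"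
proof -
  let ?f = "\<lambda>z. - ((1 + z) / 2 * ln ((1 + z) / 2) + (1 - z) / 2 * ln ((1 - z) / 2)) / ln 2"
  have "eventually (\<lambda>z. z \<in> {-1<..<1}) (nhds y)"
    using assms by (intro eventually_nhds_in_open) auto
  then have ev: "eventually (\<lambda>z. h2 ((1 + z) / 2) = ?f z) (nhds y)"
  proof eventually_elim
    case (elim z)
    have half: "1 - (1 + z) / 2 = (1 - z) / 2"
      by (simp add: field_simps)
    show ?case
      using elim unfolding h2_def half by (simp add: eta_def log_def field_simps)
  qed
  have "((\<lambda>z. (1 + z) / 2 * ln ((1 + z) / 2)) has_real_derivative (ln ((1 + y) / 2) + 1) / 2) (at y)"
    and "((\<lambda>z. (1 - z) / 2 * ln ((1 - z) / 2)) has_real_derivative - (ln ((1 - y) / 2) + 1) / 2) (at y)"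
    using assms by (auto intro!: derivative_eq_intros simp: field_simps)
  then have "(?f has_real_derivative - ((ln ((1 + y) / 2) + 1) / 2 + - (ln ((1 - y) / 2) + 1) / 2) / ln 2) (at y)"
    by (intro DERIV_cdivide DERIV_minus DERIV_add)
  moreover have "- ((ln ((1 + y) / 2) + 1) / 2 + - (ln ((1 - y) / 2) + 1) / 2) / ln 2
      = (ln ((1 - y) / 2) - ln ((1 + y) / 2)) / (2 * ln 2)"
    by (simp add: field_simps)
  ultimately show ?thesis
    using DERIV_cong_ev [OF refl ev] by simp
qed

text \<open>For \<open>r > 1\<close>, \<open>eta\<close> vanishes at the negative argument \<open>(1 - r) / 2\<close> by convention.\<close>

lemma h2_bloch_antimono:
  fixes r s :: real
  assumes "0 \<le> r" "r \<le> s"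
  shows "h2 ((1 + s) / 2) \<le> h2 ((1 + r) / 2)"
proof (cases "s < 1")
  case True
  show ?thesis
  proof (rule DERIV_nonpos_imp_nonincreasing [OF assms(2)])
    fix y assume "r \<le> y" "y \<le> s"
    then have y: "-1 < y" "y < 1" "0 \<le> y"
      using assms True by auto
    then have "ln ((1 - y) / 2) \<le> ln ((1 + y) / 2)"
      by simp
    then show "\<exists>d. ((\<lambda>y. h2 ((1 + y) / 2)) has_real_derivative d) (at y) \<and> d \<le> 0"
      using h2_bloch_deriv [OF y(1,2)] by (intro exI conjI) (auto intro: divide_nonpos_pos)
  qed
next
  case False
  then have s: "h2 ((1 + s) / 2) = - ((1 + s) / 2) * log 2 ((1 + s) / 2)"
    by (simp add: h2_def eta_def)
  show ?thesis
  proof (cases "r < 1")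
    case True
    then have "0 \<le> h2 ((1 + r) / 2)"
      using assms unfolding h2_def by (intro add_nonneg_nonneg eta_nonneg) auto
    moreover have "h2 ((1 + s) / 2) \<le> 0"
      using False unfolding s by simp
    ultimately show ?thesis
      by linarith
  next
    case False
    then have "h2 ((1 + r) / 2) = - ((1 + r) / 2) * log 2 ((1 + r) / 2)"
      by (simp add: h2_def eta_def)
    moreover have "(1 + r) / 2 * log 2 ((1 + r) / 2) \<le> (1 + s) / 2 * log 2 ((1 + s) / 2)"
      using False assms by (intro mult_mono) auto
    ultimately show ?thesis
      using s by simp
  qed
qed

subsection \<open>Measuring qubit B\<close>

lemma ptrace_B_post_meas_rho_AB:
  assumes n: "n \<in> carrier_vec 3" "n \<bullet> n = 1" and k: "k < 2"
  shows "ptrace_B (post_meas (rho_AB x t) n k)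
       = (1/4) \<cdot>\<^sub>m (1\<^sub>m 2 + dot_sigma (x + (-1) ^ k \<cdot>\<^sub>v (Tmat t *\<^sub>v n)))"
proof -
  have "n $ 0 * n $ 0 + n $ 1 * n $ 1 + n $ 2 * n $ 2 = 1"
    using n by (simp add: scalar_prod_vec3)
  then have unit: "complex_of_real (n $ 0) * complex_of_real (n $ 0)
      + complex_of_real (n $ Suc 0) * complex_of_real (n $ Suc 0)
      + complex_of_real (n $ 2) * complex_of_real (n $ 2) = 1"
    by (metis (mono_tags) One_nat_def of_real_1 of_real_add of_real_mult)
  show ?thesis (is "?L = ?R")
  proof (rule eq_matI)
    fix i j
    assume "i < dim_row ?R" "j < dim_col ?R"
    then have "i = 0 \<or> i = Suc 0" "j = 0 \<or> j = Suc 0" "k = 0 \<or> k = Suc 0"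
      using k by auto
    \<comment> \<open>each of the eight entries is a polynomial identity modulo the unit length of \<open>n\<close>\<close>
    then show "?L $$ (i, j) = ?R $$ (i, j)"
      apply (elim disjE; (hypsubst_thin)+)
             apply (simp_all add: ptrace_B_def post_meas_def index_mult_mat_lessThan kron_index proj_B_def
          rho_AB_def sum_lessThan_2 sum_lessThan_4 Tmat_mult_vec_index n
          del: index_mult_mat(1) index_mult_mat_vec)
             apply (simp_all add: field_simps)
       apply (rule rev_mp [OF unit], Groebner_Basis.algebra)+
      done
  qed simp_all
qed

lemma meas_prob_rho_AB:
  assumes "n \<in> carrier_vec 3" "n \<bullet> n = 1" "k < 2"
  shows "meas_prob (rho_AB x t) n k = 1/2"
proof -
  have "meas_prob (rho_AB x t) n k = Re (mtrace (ptrace_B (post_meas (rho_AB x t) n k)))"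
    unfolding meas_prob_def by (simp add: mtrace_ptrace_B post_meas_def)
  then show ?thesis
    by (simp add: ptrace_B_post_meas_rho_AB [OF assms] mtrace_2x2 field_simps)
qed

lemma rho_A_cond_rho_AB:
  assumes "n \<in> carrier_vec 3" "n \<bullet> n = 1" "k < 2"
  shows "rho_A_cond (rho_AB x t) n k = (1/2) \<cdot>\<^sub>m (1\<^sub>m 2 + dot_sigma (x + (-1) ^ k \<cdot>\<^sub>v (Tmat t *\<^sub>v n)))"
  unfolding rho_A_cond_def meas_prob_rho_AB [OF assms] ptrace_B_post_meas_rho_AB [OF assms]
  by (rule eq_matI) simp_all

lemma scalar_prod_add_smult_self:
  fixes x w :: "'a :: comm_ring_1 vec"
  assumes "x \<in> carrier_vec n" "w \<in> carrier_vec n" "x \<bullet> w = 0" "s * s = 1"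
  shows "(x + s \<cdot>\<^sub>v w) \<bullet> (x + s \<cdot>\<^sub>v w) = x \<bullet> x + w \<bullet> w"
  using assms by (simp add: add_scalar_prod_distrib [of _ n] scalar_prod_add_distrib [of _ n]
      comm_scalar_prod [of w n x] mult.assoc [symmetric])

lemma cond_entropy_rho_AB:
  assumes x: "x \<in> carrier_vec 3" and orth: "transpose_mat (Tmat t) *\<^sub>v x = 0\<^sub>v 3"
    and n: "n \<in> carrier_vec 3" "n \<bullet> n = 1"
  shows "cond_entropy (rho_AB x t) n
       = h2 ((1 + sqrt (x \<bullet> x + (Tmat t *\<^sub>v n) \<bullet> (Tmat t *\<^sub>v n))) / 2)"
proof -
  have Tn: "Tmat t *\<^sub>v n \<in> carrier_vec 3"
    by (rule mult_mat_vec_carrier [OF Tmat_carrier n(1)])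
  have "x \<bullet> (Tmat t *\<^sub>v n) = (transpose_mat (Tmat t) *\<^sub>v x) \<bullet> n"
    using transpose_vec_mult_scalar [OF Tmat_carrier n(1) x] by simp
  then have orth': "x \<bullet> (Tmat t *\<^sub>v n) = 0"
    using orth n by simp
  have "vn_entropy (rho_A_cond (rho_AB x t) n k)
      = h2 ((1 + sqrt (x \<bullet> x + (Tmat t *\<^sub>v n) \<bullet> (Tmat t *\<^sub>v n))) / 2)" if "k < 2" for k
  proof -
    have "(-1) ^ k * (-1) ^ k = (1::real)"
      by (simp flip: power_add)
    then have "(x + (-1) ^ k \<cdot>\<^sub>v (Tmat t *\<^sub>v n)) \<bullet> (x + (-1) ^ k \<cdot>\<^sub>v (Tmat t *\<^sub>v n))
        = x \<bullet> x + (Tmat t *\<^sub>v n) \<bullet> (Tmat t *\<^sub>v n)"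
      by (rule scalar_prod_add_smult_self [OF x Tn orth'])
    moreover have "x + (-1) ^ k \<cdot>\<^sub>v (Tmat t *\<^sub>v n) \<in> carrier_vec 3"
      using x Tn by simp
    ultimately show ?thesis
      unfolding rho_A_cond_rho_AB [OF n that] by (simp add: vn_entropy_bloch)
  qed
  then show ?thesis
    unfolding cond_entropy_def sum_lessThan_2 by (simp add: meas_prob_rho_AB [OF n])
qed

subsection \<open>The largest correlation\<close>

definition tmax :: "real vec \<Rightarrow> real" where
  "tmax t = Max {\<bar>t $ i\<bar> | i. i < 3}"

lemma tmax_set_eq: "{\<bar>t $ i\<bar> | i. i < 3} = (\<lambda>i. \<bar>t $ i\<bar>) ` {..<3}"
  by auto

lemma abs_le_tmax: "i < 3 \<Longrightarrow> \<bar>t $ i\<bar> \<le> tmax t"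
  unfolding tmax_def tmax_set_eq by (intro Max_ge) auto

lemma tmax_attained: "\<exists>i<3. \<bar>t $ i\<bar> = tmax t"
proof -
  have "tmax t \<in> (\<lambda>i. \<bar>t $ i\<bar>) ` {..<3}"
    unfolding tmax_def tmax_set_eq by (intro Max_in) (auto simp: lessThan_empty_iff)
  then show ?thesis
    by auto
qed

lemma scalar_prod_self_nonneg: "0 \<le> v \<bullet> (v :: 'a :: linordered_idom vec)"
  by (simp add: scalar_prod_def sum_nonneg)

lemma scalar_prod_mult_mat_vec_self:
  fixes A :: "'a :: comm_semiring_0 mat"
  assumes A: "A \<in> carrier_mat m k" and v: "v \<in> carrier_vec k"
  shows "(A *\<^sub>v v) \<bullet> (A *\<^sub>v v) = v \<bullet> ((transpose_mat A * A) *\<^sub>v v)"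
proof -
  have "(transpose_mat A * A) *\<^sub>v v = transpose_mat A *\<^sub>v (A *\<^sub>v v)"
    using A v by simp
  then have "v \<bullet> ((transpose_mat A * A) *\<^sub>v v) = (transpose_mat A *\<^sub>v (A *\<^sub>v v)) \<bullet> v"
    using A v by (simp add: comm_scalar_prod [of _ k])
  also have "\<dots> = (A *\<^sub>v v) \<bullet> (A *\<^sub>v v)"
    by (rule transpose_vec_mult_scalar [OF A v mult_mat_vec_carrier [OF A v]])
  finally show ?thesis
    by (rule sym)
qed

lemma Tmat_mult_vec_self_le:
  assumes n: "n \<in> carrier_vec 3" "n \<bullet> n = 1"
  shows "(Tmat t *\<^sub>v n) \<bullet> (Tmat t *\<^sub>v n) \<le> (tmax t)\<^sup>2"
proof -
  have sq: "(t $ i)\<^sup>2 \<le> (tmax t)\<^sup>2" if "i < 3" for i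
    using abs_le_tmax [OF that] by (metis abs_ge_zero power2_abs power_mono)
  have Tn: "Tmat t *\<^sub>v n \<in> carrier_vec 3"
    by (rule mult_mat_vec_carrier [OF Tmat_carrier n(1)])
  have "(Tmat t *\<^sub>v n) \<bullet> (Tmat t *\<^sub>v n) = (t $ 0)\<^sup>2 * (n $ 0)\<^sup>2 + (t $ 1)\<^sup>2 * (n $ 1)\<^sup>2 + (t $ 2)\<^sup>2 * (n $ 2)\<^sup>2"
    unfolding scalar_prod_vec3 [OF Tn Tn]
    using n by (simp add: Tmat_mult_vec_index power2_eq_square del: index_mult_mat_vec)
  also have "\<dots> \<le> (tmax t)\<^sup>2 * (n $ 0)\<^sup>2 + (tmax t)\<^sup>2 * (n $ 1)\<^sup>2 + (tmax t)\<^sup>2 * (n $ 2)\<^sup>2"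
    by (intro add_mono mult_right_mono sq) auto
  also have "\<dots> = (tmax t)\<^sup>2 * (n \<bullet> n)"
    using n(1) by (simp add: scalar_prod_vec3 power2_eq_square algebra_simps)
  finally show ?thesis
    using n by simp
qed

lemma Tmat_gram: "transpose_mat (Tmat t) * Tmat t = Tmat (vec 3 (\<lambda>i. (t $ i)\<^sup>2))"
  by (rule eq_matI) (auto simp: Tmat_def scalar_prod_def atLeast0_lessThan_Suc eval_nat_numeral
      less_Suc_eq power2_eq_square)

lemma Tmat_mult_unit_vec: "i < 3 \<Longrightarrow> Tmat s *\<^sub>v unit_vec 3 i = s $ i \<cdot>\<^sub>v unit_vec 3 i"
  by (rule eq_vecI) (simp_all add: Tmat_mult_vec_index del: index_mult_mat_vec)

theorem mainTheorem3:
  fixes x t :: "real vec"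
  assumes "x \<in> carrier_vec 3" and "t \<in> carrier_vec 3"
    and "density_matrix 4 (rho_AB x t)"
    and "transpose_mat (Tmat t) *\<^sub>v x = 0\<^sub>v 3"
  shows "(\<forall>n \<in> carrier_vec 3. n \<bullet> n = 1 \<longrightarrow>
            h2 ((1 + sqrt (x \<bullet> x + (Max {\<bar>t $ i\<bar> | i. i < 3})\<^sup>2)) / 2) \<le> cond_entropy (rho_AB x t) n)
       \<and> (\<exists>n \<in> carrier_vec 3. n \<bullet> n = 1 \<and>
            (transpose_mat (Tmat t) * Tmat t) *\<^sub>v n = (Max {\<bar>t $ i\<bar> | i. i < 3})\<^sup>2 \<cdot>\<^sub>v n)
       \<and> (\<forall>n \<in> carrier_vec 3. n \<bullet> n = 1 \<longrightarrow>
            (transpose_mat (Tmat t) * Tmat t) *\<^sub>v n = (Max {\<bar>t $ i\<bar> | i. i < 3})\<^sup>2 \<cdot>\<^sub>v n \<longrightarrow>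
            cond_entropy (rho_AB x t) n = h2 ((1 + sqrt (x \<bullet> x + (Max {\<bar>t $ i\<bar> | i. i < 3})\<^sup>2)) / 2))"
proof -
  note cond = cond_entropy_rho_AB [OF assms(1,4)]
  have lower: "h2 ((1 + sqrt (x \<bullet> x + (tmax t)\<^sup>2)) / 2) \<le> cond_entropy (rho_AB x t) n"
    if "n \<in> carrier_vec 3" "n \<bullet> n = 1" for n
    unfolding cond [OF that] using Tmat_mult_vec_self_le [OF that]
    by (intro h2_bloch_antimono) (simp_all add: add_nonneg_nonneg scalar_prod_self_nonneg)
  obtain i where i: "i < 3" "\<bar>t $ i\<bar> = tmax t"
    using tmax_attained by blast
  then have "(t $ i)\<^sup>2 = (tmax t)\<^sup>2"
    by (metis power2_abs)
  with i(1) have eigen: "(transpose_mat (Tmat t) * Tmat t) *\<^sub>v unit_vec 3 i = (tmax t)\<^sup>2 \<cdot>\<^sub>v unit_vec 3 i"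
    by (simp add: Tmat_gram Tmat_mult_unit_vec)
  have attained: "cond_entropy (rho_AB x t) n = h2 ((1 + sqrt (x \<bullet> x + (tmax t)\<^sup>2)) / 2)"
    if "n \<in> carrier_vec 3" "n \<bullet> n = 1"
      and "(transpose_mat (Tmat t) * Tmat t) *\<^sub>v n = (tmax t)\<^sup>2 \<cdot>\<^sub>v n" for n
    using cond [OF that(1,2)] scalar_prod_mult_mat_vec_self [OF Tmat_carrier that(1)] that by simp
  show ?thesis
    unfolding tmax_def [symmetric] using lower eigen attained i(1) by (auto intro!: bexI [of _ "unit_vec 3 i"])
qed

end
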